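(* There is an absolute constant $C>0$ such that for every $n\ge2$, all concave non-decreasing valuations $v_1,\dots,v_n:[0,1]\to\mathbb R_{\ge0}$ and all budgets $B_1,\dots,B_n>0$, the final allocation $y$ of the Estimate-and-Price auction (player $r_1$ receiving his allocation as specified by the auction, every other player $i$ receiving $x_i$ from Sell-Without-$r_1$) satisfies $\bar W(y)\ge\frac{1}{C\log n}\bar W^*$.
   Context: One divisible good (the interval $[0,1]$), $n\ge2$ players with valuations $v_i$ and budgets $B_i$. Let $\bar v_i(y)=\min\{v_i(y),B_i\}$ and $k=\lceil 8\log_2 n\rceil$. Liquid welfare: $\bar W(y)=\sum_i\min\{v_i(y_i),B_i\}$; $\bar W^*=\sup\{\bar W(y):y\in\mathbb R^n_{\ge0},\sum_iy_i=1\}$. Sell-Without-$r$ (for a player $r$): define $p:[0,\frac12]\to\mathbb R_{\ge0}$ by $p(t)=p_j=\frac{2^j}{8}\bar v_r(\frac12)$ for $t\in[\frac{j-1}{2k},\frac{j}{2k})$, $j=1,\dots,k$. The players other than $r$ are processed in a fixed arbitrary order; when player $i$'s turn comes, let $z_i$ be the total amount taken by earlier players; player $i$ takes $x_i\in[0,\frac12-z_i]$ maximizing $v_i(x_i)-\int_{z_i}^{z_i+x_i}p(t)\,dt$ subject to $\int_{z_i}^{z_i+x_i}p(t)\,dt\le B_i$, and pays $\pi_i=\int_{z_i}^{z_i+x_i}p(t)\,dt$. Estimate-and-Price: let $r_1=\arg\max_i\bar v_i(\frac12)$ and $r_2=\arg\max_{i\ne r_1}\bar v_i(\frac12)$ (fixed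 tie-breaking). Let $(x,\pi)$ be the outcome of Sell-Without-$r_1$ on players $[n]\setminus\{r_1\}$ and $(x',\pi')$ that of Sell-Without-$r_2$ on players $[n]\setminus\{r_2\}$. Each $i\ne r_1$ receives $x_i$ and pays $\pi_i$. Player $r_1$ receives $x'_{r_1}$ and pays $\pi'_{r_1}$ if $v_{r_1}(x'_{r_1})-\pi'_{r_1}\ge v_{r_1}(\frac12)-2\bar v_{r_2}(\frac12)$; otherwise he receives $\frac12$ and pays $2\bar v_{r_2}(\frac12)$. *)

theory Defs
  imports "HOL-Analysis.Analysis"
begin

text \<open>Players are indexed by 0..<n. Valuations v :: nat => real => real, budgets B :: nat => real.\<close>

definition kpar :: "nat \<Rightarrow> nat" where
  "kpar n = nat \<lceil>8 * log 2 (real n)\<rceil>"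

definition vbar :: "(nat \<Rightarrow> real \<Rightarrow> real) \<Rightarrow> (nat \<Rightarrow> real) \<Rightarrow> nat \<Rightarrow> real \<Rightarrow> real" where
  "vbar v B i t = min (v i t) (B i)"

text \<open>Price curve of Sell-Without-r with c = vbar_r(1/2): on [(j-1)/(2k), j/(2k)) the price is
  2^j/8 * c, j = 1..k (the value at the single point 1/2 is irrelevant; set to the j = k value).\<close>
definition price :: "nat \<Rightarrow> real \<Rightarrow> real \<Rightarrow> real" where
  "price n c t = 2 ^ (min (nat \<lfloor>2 * real (kpar n) * t\<rfloor> + 1) (kpar n)) / 8 * c"

text \<open>(x, pi) is a possible outcome of Sell-Without-r, where the players other than r are
  processed in the order in which they appear in the list ord (a fixed order of all players).\<close>
definition sell_without ::
  "nat \<Rightarrow> (nat \<Rightarrow> real \<Rightarrow> real) \<Rightarrow> (nat \<Rightarrow> real) \<Rightarrow> nat list \<Rightarrow> nat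
    \<Rightarrow> (nat \<Rightarrow> real) \<Rightarrow> (nat \<Rightarrow> real) \<Rightarrow> bool" where
  "sell_without n v B ord r x pay \<longleftrightarrow>
     (let q = filter (\<lambda>i. i \<noteq> r) ord; p = price n (vbar v B r (1/2)) in
      \<forall>m < length q.
        (let i = q ! m; z = (\<Sum>l<m. x (q ! l)) in
          0 \<le> x i \<and> x i \<le> 1/2 - z \<and>
          pay i = integral {z..z + x i} p \<and> pay i \<le> B i \<and>
          (\<forall>a. 0 \<le> a \<and> a \<le> 1/2 - z \<and> integral {z..z + a} p \<le> B i \<longrightarrow>
               v i a - integral {z..z + a} p \<le> v i (x i) - pay i)))"

definition liquid_welfare :: "nat \<Rightarrow> (nat \<Rightarrow> real \<Rightarrow> real) \<Rightarrow> (nat \<Rightarrow> real) \<Rightarrow> (nat \<Rightarrow> real) \<Rightarrow> real" where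
  "liquid_welfare n v B y = (\<Sum>i<n. min (v i (y i)) (B i))"

definition opt_liquid_welfare :: "nat \<Rightarrow> (nat \<Rightarrow> real \<Rightarrow> real) \<Rightarrow> (nat \<Rightarrow> real) \<Rightarrow> real" where
  "opt_liquid_welfare n v B =
     Sup {liquid_welfare n v B y | y. (\<forall>i<n. 0 \<le> y i) \<and> (\<Sum>i<n. y i) = 1}"

definition ep_allocation ::
  "(nat \<Rightarrow> real \<Rightarrow> real) \<Rightarrow> (nat \<Rightarrow> real) \<Rightarrow> nat \<Rightarrow> nat
    \<Rightarrow> (nat \<Rightarrow> real) \<Rightarrow> (nat \<Rightarrow> real) \<Rightarrow> (nat \<Rightarrow> real) \<Rightarrow> nat \<Rightarrow> real" where
  "ep_allocation v B r1 r2 x x' pay' i =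
     (if i \<noteq> r1 then x i
      else if v r1 (x' r1) - pay' r1 \<ge> v r1 (1/2) - 2 * vbar v B r2 (1/2) then x' r1
      else 1/2)"

end

theory Submission
  imports Defs
begin

text \<open>Let c be the largest capped half-value, attained by r1, and W the liquid welfare of the
  final allocation. The price curve of Sell-Without-r1 starts at c/4, at most doubles from one
  of its k = O(log n) steps to the next and ends at 2^k c/8 \<ge> n c/8. If the sale stops before
  the last step, no bidder can gain more than twice the current price per unit over his
  allocation, and that price is bounded by 4k times the revenue, which the buyers' liquid
  welfare covers. If the sale reaches the last step, that price alone dominates n times the
  capped value 2c of any bidder. Either way the optimum is O(c + k W). Finally c = O(k W):
  either r1 keeps a good part of his value, or r2 values the first price step enough to buy
  it in Sell-Without-r1.\<close>

section \<open>The price curve\<close>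

lemma price_nonneg: "0 \<le> c \<Longrightarrow> 0 \<le> price n c t"
  unfolding price_def by simp

lemma price_mono:
  assumes "0 \<le> c" "0 \<le> t" "t \<le> t'"
  shows "price n c t \<le> price n c t'"
proof -
  have "\<lfloor>2 * real (kpar n) * t\<rfloor> \<le> \<lfloor>2 * real (kpar n) * t'\<rfloor>"
    by (intro floor_mono mult_left_mono) (use assms in auto)
  then have "min (nat \<lfloor>2 * real (kpar n) * t\<rfloor> + 1) (kpar n)
      \<le> min (nat \<lfloor>2 * real (kpar n) * t'\<rfloor> + 1) (kpar n)"
    by (simp add: nat_mono min.coboundedI1)
  then show ?thesis
    unfolding price_def using assms(1) by (intro mult_right_mono divide_right_mono power_increasing) auto
qed

lemma price_integrable: "0 \<le> c \<Longrightarrow> 0 \<le> a \<Longrightarrow> price n c integrable_on {a..b}"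
  by (intro integrable_on_mono_on mono_onI price_mono) auto

lemma integral_price_nonneg: "0 \<le> c \<Longrightarrow> 0 \<le> a \<Longrightarrow> 0 \<le> integral {a..b} (price n c)"
  by (intro integral_nonneg price_integrable price_nonneg)

lemma price_ge_quarter:
  assumes "1 \<le> kpar n" "0 \<le> c" "0 \<le> t"
  shows "c / 4 \<le> price n c t"
proof -
  have "(2::real) ^ 1 \<le> 2 ^ min (nat \<lfloor>2 * real (kpar n) * t\<rfloor> + 1) (kpar n)"
    by (rule power_increasing) (use assms in auto)
  then show ?thesis
    unfolding price_def using assms(2) by (simp add: mult_right_mono divide_right_mono)
qed

lemma price_first_segment:
  assumes "1 \<le> kpar n" "0 \<le> t" "t < 1 / (2 * real (kpar n))"
  shows "price n c t = c / 4"
proof -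
  have "2 * real (kpar n) * t < 1"
    using assms by (simp add: field_simps)
  then have "\<lfloor>2 * real (kpar n) * t\<rfloor> = 0"
    using assms by (simp add: floor_eq_iff)
  then show ?thesis
    unfolding price_def using assms by simp
qed

lemma price_last_segment:
  assumes "1 \<le> kpar n" "1/2 - 1 / (2 * real (kpar n)) < t"
  shows "price n c t = 2 ^ kpar n / 8 * c"
proof -
  have "real (kpar n) - 1 < 2 * real (kpar n) * t"
    using assms by (simp add: field_simps)
  then have "min (nat \<lfloor>2 * real (kpar n) * t\<rfloor> + 1) (kpar n) = kpar n"
    by linarith
  then show ?thesis
    unfolding price_def by simp
qed

lemma price_shift_le_double:
  assumes "1 \<le> kpar n" "0 \<le> c" "0 \<le> t"
  shows "price n c (t + 1 / (2 * real (kpar n))) \<le> 2 * price n c t"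
proof -
  define k where "k = kpar n"
  have "2 * real k * (t + 1 / (2 * real k)) = 2 * real k * t + 1"
    using assms by (simp add: k_def field_simps)
  moreover have "0 \<le> \<lfloor>2 * real k * t\<rfloor>"
    using assms by simp
  ultimately have "min (nat \<lfloor>2 * real k * (t + 1 / (2 * real k))\<rfloor> + 1) k
      \<le> min (nat \<lfloor>2 * real k * t\<rfloor> + 1) k + 1"
    by (simp add: nat_add_distrib)
  then have "(2::real) ^ min (nat \<lfloor>2 * real k * (t + 1 / (2 * real k))\<rfloor> + 1) k
      \<le> 2 * 2 ^ min (nat \<lfloor>2 * real k * t\<rfloor> + 1) k"
    using power_increasing[of _ _ "2::real"] by fastforce
  then have "2 ^ min (nat \<lfloor>2 * real k * (t + 1 / (2 * real k))\<rfloor> + 1) k / 8 * c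
      \<le> 2 * 2 ^ min (nat \<lfloor>2 * real k * t\<rfloor> + 1) k / 8 * c"
    using assms(2) by (intro mult_right_mono divide_right_mono) auto
  then show ?thesis
    unfolding price_def k_def[symmetric] by (simp add: mult_ac)
qed

lemma integral_interval_le_const:
  fixes f :: "real \<Rightarrow> real"
  assumes "a \<le> b" "f integrable_on {a..b}" "\<And>t. t \<in> {a..b} \<Longrightarrow> f t \<le> M"
  shows "integral {a..b} f \<le> (b - a) * M"
proof -
  have "integral {a..b} f \<le> integral {a..b} (\<lambda>_. M)"
    by (rule integral_le) (use assms in auto)
  then show ?thesis using assms(1) by simp
qed

lemma integral_interval_ge_const:
  fixes f :: "real \<Rightarrow> real"
  assumes "a \<le> b" "f integrable_on {a..b}" "\<And>t. t \<in> {a..b} \<Longrightarrow> M \<le> f t"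
  shows "(b - a) * M \<le> integral {a..b} f"
proof -
  have "integral {a..b} (\<lambda>_. M) \<le> integral {a..b} f"
    by (rule integral_le) (use assms in auto)
  then show ?thesis using assms(1) by simp
qed

lemma integral_price_ge:
  assumes "1 \<le> kpar n" "0 \<le> c" "0 \<le> s"
  shows "s * (c / 4) \<le> integral {0..s} (price n c)"
  using integral_interval_ge_const[of 0 s "price n c" "c / 4"] assms
    price_integrable price_ge_quarter by auto

lemma integral_price_first_segment:
  assumes "1 \<le> kpar n" "0 \<le> t" "t \<le> t'" "t' \<le> 1 / (2 * real (kpar n))"
  shows "integral {t..t'} (price n c) = (t' - t) * (c / 4)"
proof -
  have "integral {t..t'} (price n c) = integral {t..t'} (\<lambda>_. c / 4)"
  proof (rule integral_spike[of "{t'}"])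
    fix u assume "u \<in> {t..t'} - {t'}"
    then show "c / 4 = price n c u"
      using assms price_first_segment[of n u c] by auto
  qed auto
  then show ?thesis
    using assms(3) by simp
qed

lemma integral_price_short_interval:
  assumes "1 \<le> kpar n" "0 \<le> c" "0 \<le> t" "t \<le> s" "0 \<le> \<delta>" "\<delta> \<le> 1 / (2 * real (kpar n))"
  shows "integral {t..t + \<delta>} (price n c) \<le> \<delta> * (2 * price n c s)"
proof -
  have "price n c u \<le> 2 * price n c s" if "u \<in> {t..t + \<delta>}" for u
  proof -
    have "price n c u \<le> price n c (s + 1 / (2 * real (kpar n)))"
      using that assms by (intro price_mono) auto
    also have "\<dots> \<le> 2 * price n c s"
      using assms by (intro price_shift_le_double) auto
    finally show ?thesis .
  qed
  then show ?thesis
    using integral_interval_le_const[of t "t + \<delta>"] assms price_integrable by simp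
qed

text \<open>Since the price at most doubles over a step of length 1/(2k), the price reached after
  selling s is paid back by the revenue collected on the last step before s.\<close>
lemma price_le_integral:
  assumes "1 \<le> kpar n" "0 \<le> c" "0 \<le> s"
  shows "price n c s \<le> 4 * real (kpar n) * integral {0..s} (price n c) + c / 4"
proof -
  define d where "d = 1 / (2 * real (kpar n))"
  have d: "0 < d" using assms by (simp add: d_def)
  have "0 \<le> real (kpar n) * integral {0..s} (price n c)"
    using assms integral_price_nonneg by simp
  show ?thesis
  proof (cases "s < d")
    case True
    then show ?thesis
      using price_first_segment[of n s c] assms \<open>0 \<le> real (kpar n) * _\<close> by (simp add: d_def)
  next
    case False
    have "integral {0..s - d} (price n c) + integral {s - d..s} (price n c)
        = integral {0..s} (price n c)"
      using False d by (intro Henstock_Kurzweil_Integration.integral_combine price_integrable assms) auto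
    moreover have "0 \<le> integral {0..s - d} (price n c)"
      using assms by (simp add: integral_price_nonneg)
    moreover have "d * price n c (s - d) \<le> integral {s - d..s} (price n c)"
      using integral_interval_ge_const[of "s - d" s "price n c" "price n c (s - d)"] False d assms
        price_integrable price_mono by simp
    moreover have "d * price n c s \<le> d * (2 * price n c (s - d))"
      using price_shift_le_double[of n c "s - d"] False d assms
      by (intro mult_left_mono) (auto simp: d_def)
    ultimately have "d * price n c s \<le> 2 * integral {0..s} (price n c)"
      by linarith
    then show ?thesis
      using d assms(2) by (simp add: d_def field_simps)
  qed
qed

lemma kpar_bounds:
  assumes "2 \<le> n"
  shows "1 \<le> kpar n" "real n \<le> 2 ^ kpar n" "real (kpar n) \<le> 14 * ln (real n)"
proof -
  have "1 \<le> log 2 (real n)"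
    using assms by simp
  then have k: "8 * log 2 (real n) \<le> real (kpar n)" "real (kpar n) \<le> 8 * log 2 (real n) + 1"
    unfolding kpar_def by linarith+
  then show "1 \<le> kpar n"
    using \<open>1 \<le> log 2 (real n)\<close> by simp
  have "real n = 2 powr (log 2 (real n))"
    using assms by simp
  also have "\<dots> \<le> 2 ^ kpar n"
    using k(1) \<open>1 \<le> log 2 (real n)\<close> by (simp add: powr_realpow[symmetric])
  finally show "real n \<le> 2 ^ kpar n" .
  have ln2: "2/3 \<le> ln (2::real)" "ln 2 \<le> ln (real n)"
    using ln2_ge_two_thirds assms by auto
  have "log 2 (real n) = ln (real n) / ln 2"
    by (simp add: log_def)
  also have "\<dots> \<le> ln (real n) / (2/3)"
    using ln2 by (intro divide_left_mono) auto
  finally have "log 2 (real n) \<le> 3/2 * ln (real n)"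
    by simp
  then show "real (kpar n) \<le> 14 * ln (real n)"
    using k(2) ln2 by linarith
qed

section \<open>Concave valuations\<close>

lemma concave_on_ge_scaled:
  fixes v :: "real \<Rightarrow> real"
  assumes "concave_on {0..1} v" "0 \<le> v 0" "0 \<le> \<theta>" "\<theta> \<le> 1" "0 \<le> t" "t \<le> 1"
  shows "\<theta> * v t \<le> v (\<theta> * t)"
proof -
  have "(1 - \<theta>) * v 0 + \<theta> * v t \<le> v ((1 - \<theta>) *\<^sub>R 0 + \<theta> *\<^sub>R t)"
    by (rule concave_onD[OF assms(1)]) (use assms in auto)
  moreover have "0 \<le> (1 - \<theta>) * v 0"
    using assms by simp
  ultimately show ?thesis
    by simp
qed

lemma concave_on_secant_le:
  fixes v :: "real \<Rightarrow> real"
  assumes "concave_on {0..1} v" "0 \<le> x" "x < a" "a \<le> y" "y \<le> 1"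
  shows "(v y - v x) * (a - x) \<le> (v a - v x) * (y - x)"
proof -
  define \<theta> where "\<theta> = (a - x) / (y - x)"
  have "0 < y - x"
    using assms by simp
  then have \<theta>: "0 \<le> \<theta>" "\<theta> \<le> 1" "\<theta> * (y - x) = a - x"
    using assms by (auto simp: \<theta>_def divide_le_eq)
  then have "(1 - \<theta>) *\<^sub>R x + \<theta> *\<^sub>R y = a"
    by (simp add: algebra_simps)
  moreover have "(1 - \<theta>) * v x + \<theta> * v y \<le> v ((1 - \<theta>) *\<^sub>R x + \<theta> *\<^sub>R y)"
    by (rule concave_onD[OF assms(1)]) (use assms \<theta> in auto)
  ultimately have "\<theta> * (v y - v x) \<le> v a - v x"
    by (simp add: algebra_simps)
  then have "\<theta> * (y - x) * (v y - v x) \<le> (v a - v x) * (y - x)"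
    using \<open>0 < y - x\<close> mult_right_mono by (fastforce simp: mult_ac)
  then show ?thesis
    unfolding \<theta>(3) by (simp add: mult.commute)
qed

lemma concave_on_slope_bound:
  fixes v :: "real \<Rightarrow> real"
  assumes "concave_on {0..1} v" "0 \<le> x" "0 < h" "x + h \<le> y" "y \<le> 1"
    and "v (x + h) - v x \<le> h * P"
  shows "v y - v x \<le> (y - x) * P"
proof -
  have "(v y - v x) * h \<le> (v (x + h) - v x) * (y - x)"
    using concave_on_secant_le[of v x "x + h" y] assms by simp
  also have "\<dots> \<le> h * P * (y - x)"
    using assms by (intro mult_right_mono) auto
  finally have "(v y - v x) * h \<le> ((y - x) * P) * h"
    by (simp add: mult_ac)
  then show ?thesis
    using assms(3) by simp
qed

locale market =
  fixes n :: nat and v :: "nat \<Rightarrow> real \<Rightarrow> real" and B :: "nat \<Rightarrow> real"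
  assumes two_le_n: "2 \<le> n"
    and concave: "i < n \<Longrightarrow> concave_on {0..1} (v i)"
    and mono: "i < n \<Longrightarrow> mono_on {0..1} (v i)"
    and nonneg: "i < n \<Longrightarrow> t \<in> {0..1} \<Longrightarrow> 0 \<le> v i t"
    and budget_pos: "i < n \<Longrightarrow> 0 < B i"
begin

lemma kpar_ge_1: "1 \<le> kpar n"
  using kpar_bounds two_le_n by blast

lemma vbar_nonneg: "i < n \<Longrightarrow> 0 \<le> t \<Longrightarrow> t \<le> 1 \<Longrightarrow> 0 \<le> vbar v B i t"
  unfolding vbar_def using nonneg budget_pos by (simp add: less_imp_le)

lemma capped_value_le_twice_half:
  assumes "i < n" "0 \<le> y" "y \<le> 1"
  shows "min (v i y) (B i) \<le> 2 * vbar v B i (1/2)"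
proof -
  have "1/2 * v i 1 \<le> v i (1/2 * 1)"
    using assms by (intro concave_on_ge_scaled concave nonneg) auto
  moreover have "v i y \<le> v i 1"
    using assms by (intro mono_onD[OF mono]) auto
  ultimately have "v i y \<le> 2 * v i (1/2)"
    by simp
  then show ?thesis
    unfolding vbar_def using budget_pos[OF assms(1)] by linarith
qed

lemma feasible_le_one:
  fixes y :: "nat \<Rightarrow> real"
  assumes "\<forall>i<n. 0 \<le> y i" "(\<Sum>i<n. y i) = 1" "i < n"
  shows "y i \<le> 1"
  using member_le_sum[of i "{..<n}" y] assms by auto

lemma feasible_capped_value_le:
  fixes y :: "nat \<Rightarrow> real"
  assumes "\<forall>i<n. 0 \<le> y i" "(\<Sum>i<n. y i) = 1" "i < n" "vbar v B i (1/2) \<le> M"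
  shows "min (v i (y i)) (B i) \<le> 2 * M"
proof -
  have "min (v i (y i)) (B i) \<le> 2 * vbar v B i (1/2)"
    using assms feasible_le_one[OF assms(1-3)] by (intro capped_value_le_twice_half) auto
  then show ?thesis
    using assms(4) by linarith
qed

lemma liquid_welfare_remove:
  "r < n \<Longrightarrow> liquid_welfare n v B y
     = min (v r (y r)) (B r) + (\<Sum>i\<in>{..<n} - {r}. min (v i (y i)) (B i))"
  unfolding liquid_welfare_def by (simp add: sum.remove)

lemma opt_liquid_welfare_le:
  assumes "\<And>y. \<forall>i<n. 0 \<le> y i \<Longrightarrow> (\<Sum>i<n. y i) = 1 \<Longrightarrow> liquid_welfare n v B y \<le> M"
  shows "opt_liquid_welfare n v B \<le> M"
  unfolding opt_liquid_welfare_def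
proof (rule cSup_least)
  let ?e = "\<lambda>i::nat. if i = 0 then 1 else (0::real)"
  have "(\<forall>i<n. 0 \<le> ?e i) \<and> (\<Sum>i<n. ?e i) = 1"
    using two_le_n by simp
  then have "liquid_welfare n v B ?e
      \<in> {liquid_welfare n v B y |y. (\<forall>i<n. 0 \<le> y i) \<and> (\<Sum>i<n. y i) = 1}"
    by (intro CollectI exI[of _ ?e]) simp
  then show "{liquid_welfare n v B y |y. (\<forall>i<n. 0 \<le> y i) \<and> (\<Sum>i<n. y i) = 1} \<noteq> {}"
    by auto
next
  fix w assume "w \<in> {liquid_welfare n v B y |y. (\<forall>i<n. 0 \<le> y i) \<and> (\<Sum>i<n. y i) = 1}"
  then show "w \<le> M"
    using assms by auto
qed

end

section \<open>A run of Sell-Without-r\<close>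

locale sell_without_run = market +
  fixes ord :: "nat list" and r :: nat and x pay :: "nat \<Rightarrow> real"
  assumes distinct_ord: "distinct ord"
    and set_ord: "set ord = {..<n}"
    and r_less: "r < n"
    and outcome: "sell_without n v B ord r x pay"
begin

definition buyers :: "nat list" where
  "buyers = filter (\<lambda>i. i \<noteq> r) ord"

abbreviation base_value :: real where
  "base_value \<equiv> vbar v B r (1/2)"

abbreviation curve :: "real \<Rightarrow> real" where
  "curve \<equiv> price n base_value"

definition sold :: "nat \<Rightarrow> real" where
  "sold m = (\<Sum>l<m. x (buyers ! l))"

abbreviation total_sold :: real where
  "total_sold \<equiv> sold (length buyers)"

definition revenue :: real where
  "revenue = (\<Sum>l<length buyers. pay (buyers ! l))"

definition buyers_welfare :: real where
  "buyers_welfare = (\<Sum>i\<in>{..<n} - {r}. min (v i (x i)) (B i))"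

lemma set_buyers: "set buyers = {..<n} - {r}"
  using set_ord by (auto simp: buyers_def)

lemma buyer_less: "i \<in> set buyers \<Longrightarrow> i < n"
  by (simp add: set_buyers)

lemma sum_buyers: "(\<Sum>i\<in>{..<n} - {r}. f i) = (\<Sum>l<length buyers. f (buyers ! l))"
proof -
  have "distinct buyers"
    using distinct_ord by (simp add: buyers_def)
  then have "(\<Sum>i\<in>set buyers. f i) = (\<Sum>l<length buyers. f (buyers ! l))"
    by (simp add: sum_list_distinct_conv_sum_set[symmetric] sum_list_sum_nth atLeast0LessThan)
  then show ?thesis
    by (simp add: set_buyers)
qed

lemma base_value_nonneg: "0 \<le> base_value"
  using vbar_nonneg r_less by simp

lemma buyer_outcome:
  assumes "m < length buyers"
  shows alloc_nonneg: "0 \<le> x (buyers ! m)"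
    and alloc_le: "x (buyers ! m) \<le> 1/2 - sold m"
    and pay_eq: "pay (buyers ! m) = integral {sold m..sold m + x (buyers ! m)} curve"
    and pay_le_budget: "pay (buyers ! m) \<le> B (buyers ! m)"
    and best_response: "\<And>a. 0 \<le> a \<Longrightarrow> a \<le> 1/2 - sold m \<Longrightarrow>
      integral {sold m..sold m + a} curve \<le> B (buyers ! m) \<Longrightarrow>
      v (buyers ! m) a - integral {sold m..sold m + a} curve
        \<le> v (buyers ! m) (x (buyers ! m)) - pay (buyers ! m)"
  using outcome assms unfolding sell_without_def Let_def buyers_def sold_def by auto

lemma sold_Suc: "sold (Suc m) = sold m + x (buyers ! m)"
  by (simp add: sold_def)

lemma sold_nonneg: "m \<le> length buyers \<Longrightarrow> 0 \<le> sold m"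
  unfolding sold_def by (intro sum_nonneg alloc_nonneg) auto

lemma sold_mono: "m \<le> m' \<Longrightarrow> m' \<le> length buyers \<Longrightarrow> sold m \<le> sold m'"
  unfolding sold_def by (intro sum_mono2 alloc_nonneg) auto

lemma pay_nonneg: "m < length buyers \<Longrightarrow> 0 \<le> pay (buyers ! m)"
  using pay_eq sold_nonneg base_value_nonneg integral_price_nonneg by simp

lemma pay_le_capped_value:
  assumes m: "m < length buyers"
  shows "pay (buyers ! m) \<le> min (v (buyers ! m) (x (buyers ! m))) (B (buyers ! m))"
proof -
  have j: "buyers ! m < n"
    using m buyer_less nth_mem by blast
  have "v (buyers ! m) 0 - 0 \<le> v (buyers ! m) (x (buyers ! m)) - pay (buyers ! m)"
    using best_response[OF m, of 0] alloc_nonneg[OF m] alloc_le[OF m] budget_pos[OF j] by simp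
  moreover have "0 \<le> v (buyers ! m) 0"
    using nonneg[OF j] by simp
  ultimately show ?thesis
    using pay_le_budget[OF m] by simp
qed

lemma capped_value_nonneg:
  assumes "i \<in> set buyers"
  shows "0 \<le> min (v i (x i)) (B i)"
proof -
  obtain m where "m < length buyers" "buyers ! m = i"
    using assms by (auto simp: in_set_conv_nth)
  then show ?thesis
    using pay_nonneg pay_le_capped_value by (metis order_trans)
qed

lemma prefix_revenue_eq:
  "m \<le> length buyers \<Longrightarrow> (\<Sum>l<m. pay (buyers ! l)) = integral {0..sold m} curve"
proof (induction m)
  case (Suc m)
  have "integral {0..sold m} curve + integral {sold m..sold (Suc m)} curve
      = integral {0..sold (Suc m)} curve"
    using Suc.prems alloc_nonneg sold_nonneg base_value_nonneg
    by (intro Henstock_Kurzweil_Integration.integral_combine price_integrable) (auto simp: sold_Suc)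
  then show ?case
    using Suc pay_eq[of m] by (simp add: sold_Suc)
qed (simp add: sold_def)

lemma revenue_eq: "revenue = integral {0..total_sold} curve"
  unfolding revenue_def by (simp add: prefix_revenue_eq)

lemma revenue_le_buyers_welfare: "revenue \<le> buyers_welfare"
  unfolding revenue_def buyers_welfare_def sum_buyers by (intro sum_mono pay_le_capped_value) simp

lemma revenue_nonneg: "0 \<le> revenue"
  unfolding revenue_def by (intro sum_nonneg pay_nonneg) simp

lemma buyers_welfare_nonneg: "0 \<le> buyers_welfare"
  using revenue_nonneg revenue_le_buyers_welfare by linarith

text \<open>A buyer who values the good at least a quarter as much as r can afford the rest of the
  first price step, and concavity makes it worth twice its price to him.\<close>
lemma first_step_capped_value:
  assumes m: "m < length buyers"
    and strong: "base_value \<le> 4 * vbar v B (buyers ! m) (1/2)"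
    and early: "sold m < 1 / (2 * real (kpar n))"
  shows "(1 / (2 * real (kpar n)) - sold m) * (base_value / 4)
    \<le> min (v (buyers ! m) (x (buyers ! m))) (B (buyers ! m))"
proof -
  define j where "j = buyers ! m"
  define z where "z = sold m"
  define a where "a = 1 / (2 * real (kpar n)) - z"
  have j: "j < n"
    unfolding j_def using m buyer_less nth_mem by blast
  have z: "0 \<le> z" "0 \<le> x j"
    using sold_nonneg alloc_nonneg m by (auto simp: z_def j_def)
  have "1 / (2 * real (kpar n)) \<le> 1/2"
    using kpar_ge_1 by simp
  then have a: "0 < a" "a \<le> 1/2 - z" "a \<le> 1"
    using early z by (auto simp: a_def z_def)
  have cost: "integral {z..z + a} curve = a * (base_value / 4)"
    using integral_price_first_segment[of n z] kpar_ge_1 z early by (simp add: a_def z_def)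
  have quarter: "base_value / 4 \<le> v j (1/2)" "base_value / 4 \<le> B j"
    using strong by (auto simp: vbar_def j_def)
  have affordable: "a * (base_value / 4) \<le> B j"
    using a quarter base_value_nonneg mult_left_le_one_le[of "base_value / 4" a] by simp
  have "v j a - a * (base_value / 4) \<le> v j (x j) - pay j"
    using best_response[OF m, of a] a cost affordable by (simp add: j_def z_def)
  moreover have "2 * a * v j (1/2) \<le> v j (2 * a * (1/2))"
    using a z by (intro concave_on_ge_scaled concave[OF j] nonneg[OF j]) auto
  moreover have "2 * a * (base_value / 4) \<le> 2 * a * v j (1/2)"
    using a quarter by (intro mult_left_mono) auto
  ultimately have "a * (base_value / 4) \<le> min (v j (x j)) (B j)"
    using pay_nonneg[OF m] affordable by (simp add: j_def)
  then show ?thesis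
    by (simp add: a_def z_def j_def)
qed

lemma strong_buyer_prefix_bound:
  assumes m: "m < length buyers"
    and strong: "base_value \<le> 4 * vbar v B (buyers ! m) (1/2)"
  shows "base_value / (8 * real (kpar n))
    \<le> (\<Sum>l<m. pay (buyers ! l)) + min (v (buyers ! m) (x (buyers ! m))) (B (buyers ! m))"
proof -
  define d where "d = 1 / (2 * real (kpar n))"
  have "base_value / (8 * real (kpar n)) = d * (base_value / 4)"
    by (simp add: d_def)
  moreover have "sold m * (base_value / 4) \<le> (\<Sum>l<m. pay (buyers ! l))"
    using prefix_revenue_eq integral_price_ge kpar_ge_1 base_value_nonneg sold_nonneg m by simp
  moreover have "d * (base_value / 4)
      \<le> sold m * (base_value / 4) + min (v (buyers ! m) (x (buyers ! m))) (B (buyers ! m))"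
  proof (cases "d \<le> sold m")
    case True
    then have "d * (base_value / 4) \<le> sold m * (base_value / 4)"
      using base_value_nonneg by (intro mult_right_mono) auto
    moreover have "0 \<le> min (v (buyers ! m) (x (buyers ! m))) (B (buyers ! m))"
      using capped_value_nonneg m by simp
    ultimately show ?thesis
      by linarith
  next
    case False
    then have "(d - sold m) * (base_value / 4)
        \<le> min (v (buyers ! m) (x (buyers ! m))) (B (buyers ! m))"
      unfolding d_def by (intro first_step_capped_value[OF m strong]) simp
    moreover have "(d - sold m) * (base_value / 4) = d * (base_value / 4) - sold m * (base_value / 4)"
      by (simp add: left_diff_distrib)
    ultimately show ?thesis
      by linarith
  qed
  ultimately show ?thesis
    by linarith
qed

lemma strong_buyer_bound:
  assumes "j \<in> set buyers" "base_value \<le> 4 * vbar v B j (1/2)"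
  shows "base_value \<le> 16 * real (kpar n) * buyers_welfare"
proof -
  obtain m where m: "m < length buyers" "buyers ! m = j"
    using assms(1) by (auto simp: in_set_conv_nth)
  have "(\<Sum>l<m. pay (buyers ! l)) \<le> revenue"
    unfolding revenue_def using m pay_nonneg by (intro sum_mono2) auto
  moreover have "min (v j (x j)) (B j) \<le> buyers_welfare"
    unfolding buyers_welfare_def
    by (rule member_le_sum) (use assms(1) set_buyers capped_value_nonneg in auto)
  ultimately have "base_value / (8 * real (kpar n)) \<le> 2 * buyers_welfare"
    using strong_buyer_prefix_bound[OF m(1)] assms(2) revenue_le_buyers_welfare
    unfolding m(2) by linarith
  then show ?thesis
    using kpar_ge_1 by (simp add: field_simps)
qed

lemma extended_purchase_cost:
  assumes m: "m < length buyers"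
    and \<delta>: "0 \<le> \<delta>" "\<delta> \<le> 1 / (2 * real (kpar n))"
  shows "integral {sold m..sold m + (x (buyers ! m) + \<delta>)} curve
    \<le> pay (buyers ! m) + \<delta> * (2 * curve total_sold)"
proof -
  let ?z = "sold m" and ?x = "x (buyers ! m)"
  have z: "0 \<le> ?z" "0 \<le> ?x" "?z + ?x \<le> total_sold"
    using sold_nonneg alloc_nonneg[OF m] sold_mono[of "Suc m"] m by (auto simp: sold_Suc)
  have "integral {?z..?z + (?x + \<delta>)} curve = integral {?z..?z + ?x} curve + integral {?z + ?x..?z + ?x + \<delta>} curve"
    using z \<delta> base_value_nonneg
    by (subst Henstock_Kurzweil_Integration.integral_combine[symmetric])
      (auto intro: price_integrable simp: add.assoc)
  also have "integral {?z + ?x..?z + ?x + \<delta>} curve \<le> \<delta> * (2 * curve total_sold)"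
    using z \<delta> kpar_ge_1 base_value_nonneg by (intro integral_price_short_interval) auto
  finally show ?thesis
    using pay_eq[OF m] by simp
qed

text \<open>If the sale stops at least one price step before the supply 1/2 runs out, no buyer can
  gain more than 2 \<open>curve total_sold\<close> per unit by deviating: buying up to one more step beyond
  his allocation costs at most that much per unit, and concavity extends the bound to any
  quantity.\<close>
lemma capped_value_le_deviation:
  assumes i: "i \<in> set buyers"
    and room: "total_sold + 1 / (2 * real (kpar n)) \<le> 1/2"
    and y: "0 \<le> y" "y \<le> 1"
  shows "min (v i y) (B i) \<le> min (v i (x i)) (B i) + y * (2 * curve total_sold)"
proof -
  obtain m where m: "m < length buyers" "buyers ! m = i"
    using i by (auto simp: in_set_conv_nth)
  define P where "P = 2 * curve total_sold"
  have i_less: "i < n"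
    using i buyer_less by blast
  have x: "0 \<le> x i" "x i \<le> 1/2 - sold m" "sold m + x i \<le> total_sold" "0 \<le> sold m"
    using sold_nonneg alloc_nonneg[OF m(1)] alloc_le[OF m(1)] sold_mono[of "Suc m"] m
    by (auto simp: sold_Suc)
  have P: "0 \<le> P"
    using price_nonneg base_value_nonneg by (simp add: P_def)
  have "v i y \<le> v i (x i) + y * P \<or> B i \<le> min (v i (x i)) (B i) + y * P"
  proof (cases "y \<le> x i")
    case True
    then have "v i y \<le> v i (x i)"
      using y x room by (intro mono_onD[OF mono[OF i_less]]) auto
    moreover have "0 \<le> y * P"
      using y P by simp
    ultimately have "v i y \<le> v i (x i) + y * P"
      by linarith
    then show ?thesis ..
  next
    case False
    define \<delta> where "\<delta> = min (y - x i) (1 / (2 * real (kpar n)))"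
    have \<delta>: "0 < \<delta>" "\<delta> \<le> y - x i" "\<delta> \<le> 1 / (2 * real (kpar n))"
      using False kpar_ge_1 by (auto simp: \<delta>_def)
    have cost: "integral {sold m..sold m + (x i + \<delta>)} curve \<le> pay i + \<delta> * P"
      using extended_purchase_cost[OF m(1), of \<delta>] \<delta> m(2) by (simp add: P_def)
    have "\<delta> \<le> y" "y - x i \<le> y"
      using \<delta> x by linarith+
    then have "\<delta> * P \<le> y * P" "(y - x i) * P \<le> y * P"
      using P by (simp_all add: mult_right_mono)
    show ?thesis
    proof (cases "integral {sold m..sold m + (x i + \<delta>)} curve \<le> B i")
      case True
      have "x i + \<delta> \<le> 1/2 - sold m"
        using x \<delta> room by linarith
      then have "v i (x i + \<delta>) - integral {sold m..sold m + (x i + \<delta>)} curve \<le> v i (x i) - pay i"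
        using True x \<delta> by (intro best_response[OF m(1), unfolded m(2)]) auto
      then have "v i (x i + \<delta>) - v i (x i) \<le> \<delta> * P"
        using cost by linarith
      then have "v i y - v i (x i) \<le> (y - x i) * P"
        using x \<delta> y by (intro concave_on_slope_bound[OF concave[OF i_less]]) auto
      then have "v i y \<le> v i (x i) + y * P"
        using \<open>(y - x i) * P \<le> y * P\<close> by linarith
      then show ?thesis ..
    next
      case False
      then have "B i \<le> min (v i (x i)) (B i) + y * P"
        using cost \<open>\<delta> * P \<le> y * P\<close> pay_le_capped_value[OF m(1), unfolded m(2)] by linarith
      then show ?thesis ..
    qed
  qed
  then show ?thesis
  proof
    assume "v i y \<le> v i (x i) + y * P"
    moreover have "0 \<le> y * P"
      using y P by simp
    ultimately show ?thesis
      unfolding P_def[symmetric] by linarith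
  next
    assume "B i \<le> min (v i (x i)) (B i) + y * P"
    then show ?thesis
      unfolding P_def[symmetric] by linarith
  qed
qed

lemma buyers_deviation_welfare_bound:
  assumes room: "total_sold + 1 / (2 * real (kpar n)) \<le> 1/2"
    and y: "\<forall>i<n. 0 \<le> y i" "(\<Sum>i<n. y i) = 1"
  shows "(\<Sum>i\<in>{..<n} - {r}. min (v i (y i)) (B i)) \<le> buyers_welfare + 2 * curve total_sold"
proof -
  have "(\<Sum>i\<in>{..<n} - {r}. min (v i (y i)) (B i))
      \<le> (\<Sum>i\<in>{..<n} - {r}. min (v i (x i)) (B i) + y i * (2 * curve total_sold))"
    using room y feasible_le_one[OF y] set_buyers by (intro sum_mono capped_value_le_deviation) auto
  also have "\<dots> = buyers_welfare + (\<Sum>i\<in>{..<n} - {r}. y i) * (2 * curve total_sold)"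
    by (simp add: buyers_welfare_def sum.distrib sum_distrib_right)
  also have "\<dots> \<le> buyers_welfare + 2 * curve total_sold"
  proof -
    have "0 \<le> (\<Sum>i\<in>{..<n} - {r}. y i)" "(\<Sum>i\<in>{..<n} - {r}. y i) \<le> 1"
      using y sum_mono2[of "{..<n}" "{..<n} - {r}" y] by (auto intro: sum_nonneg)
    then show ?thesis
      using price_nonneg base_value_nonneg by (intro add_left_mono mult_left_le_one_le) auto
  qed
  finally show ?thesis .
qed

lemma liquid_welfare_le_top_price:
  assumes r_max: "\<And>i. i < n \<Longrightarrow> vbar v B i (1/2) \<le> base_value"
    and sold_out: "1/2 < total_sold + 1 / (2 * real (kpar n))"
    and y: "\<forall>i<n. 0 \<le> y i" "(\<Sum>i<n. y i) = 1"
  shows "liquid_welfare n v B y \<le> 16 * curve total_sold"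
proof -
  have "curve total_sold = 2 ^ kpar n / 8 * base_value"
    using sold_out price_last_segment kpar_ge_1 by simp
  moreover have "real n * base_value \<le> 2 ^ kpar n * base_value"
    using kpar_bounds(2) two_le_n base_value_nonneg by (intro mult_right_mono)
  moreover have "liquid_welfare n v B y \<le> (\<Sum>i<n. 2 * base_value)"
    unfolding liquid_welfare_def
    using feasible_capped_value_le[OF y _ r_max] by (intro sum_mono) auto
  ultimately show ?thesis
    by simp
qed

text \<open>The price at which the sale stops is paid for by the revenue; if the sale runs through all
  steps, that price is at least n base_value/8, which pays for any liquid welfare.\<close>
lemma feasible_welfare_bound:
  assumes r_max: "\<And>i. i < n \<Longrightarrow> vbar v B i (1/2) \<le> base_value"
    and y: "\<forall>i<n. 0 \<le> y i" "(\<Sum>i<n. y i) = 1"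
  shows "liquid_welfare n v B y \<le> 4 * base_value + 64 * real (kpar n) * revenue + buyers_welfare"
proof -
  let ?kR = "real (kpar n) * revenue"
  have top_price: "curve total_sold \<le> 4 * ?kR + base_value / 4"
    using price_le_integral[OF kpar_ge_1 base_value_nonneg sold_nonneg[of "length buyers"]]
    by (simp add: revenue_eq mult.assoc)
  have kR: "0 \<le> ?kR" "64 * real (kpar n) * revenue = 64 * ?kR"
    using revenue_nonneg by simp_all
  show ?thesis
  proof (cases "total_sold + 1 / (2 * real (kpar n)) \<le> 1/2")
    case True
    then have "liquid_welfare n v B y \<le> 2 * base_value + buyers_welfare + 2 * curve total_sold"
      using liquid_welfare_remove[OF r_less, of y] buyers_deviation_welfare_bound[OF True y]
        feasible_capped_value_le[OF y r_less r_max[OF r_less]] by linarith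
    then show ?thesis
      using top_price kR base_value_nonneg by linarith
  next
    case False
    then have "liquid_welfare n v B y \<le> 16 * curve total_sold"
      using liquid_welfare_le_top_price[OF r_max _ y] by simp
    then show ?thesis
      using top_price kR base_value_nonneg buyers_welfare_nonneg by linarith
  qed
qed

end

section \<open>Estimate-and-Price\<close>

locale estimate_and_price =
  first: sell_without_run n v B ord r1 x pay + second: sell_without_run n v B ord r2 x' pay'
  for n v B ord r1 x pay r2 x' pay' +
  assumes r1_max: "i < n \<Longrightarrow> vbar v B i (1/2) \<le> vbar v B r1 (1/2)"
    and r2_ne_r1: "r2 \<noteq> r1"
begin

abbreviation allocation :: "nat \<Rightarrow> real" where
  "allocation \<equiv> ep_allocation v B r1 r2 x x' pay'"

abbreviation welfare :: real where
  "welfare \<equiv> liquid_welfare n v B allocation"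

lemma welfare_eq: "welfare = min (v r1 (allocation r1)) (B r1) + first.buyers_welfare"
  unfolding first.liquid_welfare_remove[OF first.r_less] first.buyers_welfare_def
  by (simp add: ep_allocation_def)

lemma second_sale_to_r1: "0 \<le> x' r1" "x' r1 \<le> 1/2" "0 \<le> pay' r1"
proof -
  have "r1 \<in> set second.buyers"
    using r2_ne_r1 first.r_less second.set_buyers by auto
  then obtain m where m: "m < length second.buyers" "second.buyers ! m = r1"
    by (auto simp: in_set_conv_nth)
  then have "0 \<le> x' r1" "x' r1 \<le> 1/2 - second.sold m" "0 \<le> second.sold m" "0 \<le> pay' r1"
    using second.alloc_nonneg[OF m(1)] second.alloc_le[OF m(1)] second.sold_nonneg[of m]
      second.pay_nonneg[OF m(1)] by simp_all
  then show "0 \<le> x' r1" "x' r1 \<le> 1/2" "0 \<le> pay' r1"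
    by linarith+
qed

lemma buyers_welfare_le_welfare: "first.buyers_welfare \<le> welfare"
proof -
  have "0 \<le> min (v r1 (allocation r1)) (B r1)"
    using second_sale_to_r1 first.r_less first.nonneg first.budget_pos
    by (simp add: ep_allocation_def less_imp_le)
  then show ?thesis
    using welfare_eq by linarith
qed

lemma welfare_nonneg: "0 \<le> welfare"
  using buyers_welfare_le_welfare first.buyers_welfare_nonneg by linarith

text \<open>If r1 keeps the offer of the second sale although his own half is worth more than
  4 \<open>vbar r2\<close>, the offer still leaves him at least half of that value.\<close>
lemma base_value_le_welfare_or_strong_r2:
  "first.base_value \<le> 2 * welfare \<or> first.base_value \<le> 4 * vbar v B r2 (1/2)"
proof (cases "first.base_value \<le> 4 * vbar v B r2 (1/2)")
  case False
  let ?c = "first.base_value"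
  have c: "?c \<le> v r1 (1/2)" "?c \<le> B r1" "0 \<le> ?c"
    using first.base_value_nonneg by (auto simp: vbar_def)
  have "?c / 2 \<le> min (v r1 (allocation r1)) (B r1)"
  proof (cases "v r1 (x' r1) - pay' r1 \<ge> v r1 (1/2) - 2 * vbar v B r2 (1/2)")
    case True
    then have "v r1 (1/2) - 2 * vbar v B r2 (1/2) \<le> v r1 (allocation r1)"
      using second_sale_to_r1 by (simp add: ep_allocation_def)
    then have "?c / 2 \<le> v r1 (allocation r1)"
      using c False by linarith
    then show ?thesis
      using c by simp
  next
    case False
    then have "min (v r1 (allocation r1)) (B r1) = ?c"
      by (simp add: ep_allocation_def vbar_def)
    then show ?thesis
      using c by linarith
  qed
  then have "?c \<le> 2 * welfare"
    using welfare_eq first.buyers_welfare_nonneg by linarith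
  then show ?thesis ..
qed simp

lemma base_value_le_welfare: "first.base_value \<le> 16 * real (kpar n) * welfare"
  using base_value_le_welfare_or_strong_r2
proof
  assume "first.base_value \<le> 2 * welfare"
  moreover have "2 * welfare \<le> 16 * real (kpar n) * welfare"
    using first.kpar_ge_1 welfare_nonneg by (intro mult_right_mono) auto
  ultimately show ?thesis
    by linarith
next
  assume "first.base_value \<le> 4 * vbar v B r2 (1/2)"
  then have "first.base_value \<le> 16 * real (kpar n) * first.buyers_welfare"
    using first.strong_buyer_bound r2_ne_r1 second.r_less first.set_buyers by simp
  also have "\<dots> \<le> 16 * real (kpar n) * welfare"
    using buyers_welfare_le_welfare by (intro mult_left_mono) auto
  finally show ?thesis .
qed

theorem opt_liquid_welfare_le_welfare:
  "opt_liquid_welfare n v B \<le> 129 * real (kpar n) * welfare"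
proof (rule first.opt_liquid_welfare_le)
  let ?kW = "real (kpar n) * welfare"
  fix y :: "nat \<Rightarrow> real" assume "\<forall>i<n. 0 \<le> y i" "(\<Sum>i<n. y i) = 1"
  then have "liquid_welfare n v B y
      \<le> 4 * first.base_value + 64 * real (kpar n) * first.revenue + first.buyers_welfare"
    using r1_max by (intro first.feasible_welfare_bound) auto
  also have "\<dots> = 4 * first.base_value + 64 * (real (kpar n) * first.revenue) + first.buyers_welfare"
    by simp
  also have "\<dots> \<le> 64 * ?kW + 64 * ?kW + ?kW"
  proof -
    have "first.base_value \<le> 16 * ?kW"
      using base_value_le_welfare by (simp add: mult.assoc)
    moreover have "real (kpar n) * first.revenue \<le> ?kW"
      using first.revenue_le_buyers_welfare buyers_welfare_le_welfare by (intro mult_left_mono) auto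
    moreover have "first.buyers_welfare \<le> ?kW"
      using first.kpar_ge_1 welfare_nonneg buyers_welfare_le_welfare
        mult_le_cancel_right1[of welfare "real (kpar n)"] by linarith
    ultimately show ?thesis
      by linarith
  qed
  finally show "liquid_welfare n v B y \<le> 129 * real (kpar n) * welfare"
    by simp
qed

end

theorem mainTheorem17:
  shows "\<exists>C>0. \<forall>(n::nat) (v::nat \<Rightarrow> real \<Rightarrow> real) (B::nat \<Rightarrow> real) (ord::nat list)
            (r1::nat) (r2::nat) (x::nat \<Rightarrow> real) (pay::nat \<Rightarrow> real) (x'::nat \<Rightarrow> real) (pay'::nat \<Rightarrow> real).
     n \<ge> 2 \<and>
     (\<forall>i<n. concave_on {0..1} (v i) \<and> mono_on {0..1} (v i) \<and> (\<forall>t\<in>{0..1}. 0 \<le> v i t)) \<and>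
     (\<forall>i<n. 0 < B i) \<and>
     distinct ord \<and> set ord = {..<n} \<and>
     r1 < n \<and> (\<forall>i<n. vbar v B i (1/2) \<le> vbar v B r1 (1/2)) \<and>
     r2 < n \<and> r2 \<noteq> r1 \<and> (\<forall>i<n. i \<noteq> r1 \<longrightarrow> vbar v B i (1/2) \<le> vbar v B r2 (1/2)) \<and>
     sell_without n v B ord r1 x pay \<and>
     sell_without n v B ord r2 x' pay'
     \<longrightarrow> liquid_welfare n v B (ep_allocation v B r1 r2 x x' pay')
           \<ge> opt_liquid_welfare n v B / (C * ln (real n))"
proof (intro exI[of _ "1806::real"] conjI allI impI)
  fix n :: nat and v :: "nat \<Rightarrow> real \<Rightarrow> real" and B :: "nat \<Rightarrow> real" and ord :: "nat list"
    and r1 r2 :: nat and x pay x' pay' :: "nat \<Rightarrow> real"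
  assume H: "n \<ge> 2 \<and>
     (\<forall>i<n. concave_on {0..1} (v i) \<and> mono_on {0..1} (v i) \<and> (\<forall>t\<in>{0..1}. 0 \<le> v i t)) \<and>
     (\<forall>i<n. 0 < B i) \<and>
     distinct ord \<and> set ord = {..<n} \<and>
     r1 < n \<and> (\<forall>i<n. vbar v B i (1/2) \<le> vbar v B r1 (1/2)) \<and>
     r2 < n \<and> r2 \<noteq> r1 \<and> (\<forall>i<n. i \<noteq> r1 \<longrightarrow> vbar v B i (1/2) \<le> vbar v B r2 (1/2)) \<and>
     sell_without n v B ord r1 x pay \<and>
     sell_without n v B ord r2 x' pay'"
  interpret estimate_and_price n v B ord r1 x pay r2 x' pay'
    by unfold_locales (use H in blast)+
  have ln_n: "0 < ln (real n)" "real (kpar n) \<le> 14 * ln (real n)"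
    using first.two_le_n kpar_bounds by auto
  have "opt_liquid_welfare n v B \<le> 129 * real (kpar n) * welfare"
    by (rule opt_liquid_welfare_le_welfare)
  also have "\<dots> \<le> 129 * (14 * ln (real n)) * welfare"
    using ln_n welfare_nonneg by (intro mult_right_mono) auto
  finally have "opt_liquid_welfare n v B \<le> (1806 * ln (real n)) * welfare"
    by simp
  then show "opt_liquid_welfare n v B / (1806 * ln (real n)) \<le> welfare"
    using ln_n by (simp add: divide_le_eq mult.commute)
qed simp

end
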